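(* For every $\omega>0$, $$\|\mathcal F_\omega^{-1}\mathcal R\|_2<\frac{2\sqrt{\omega^2+\nu^2}}{\omega},$$ where $\nu$ is the largest diagonal entry of $D$.
   Context: Let $M\ge 1$ be an integer and let $I$ denote an identity matrix of the appropriate size. Let $T\in\mathbb R^{M\times M}$ be real symmetric positive definite. Let $D=\operatorname{diag}(d_1,\dots,d_M)$ with $d_j\ge0$, and $\nu=\max_j d_j$. Define the block matrices in $\mathbb R^{2M\times 2M}$: $$\mathcal R=\begin{bmatrix} I & T-D\\ D-T & I\end{bmatrix},\qquad \mathcal T=\begin{bmatrix} I & T\\ -T & I\end{bmatrix},\qquad \mathcal D=\begin{bmatrix} 0 & -D\\ D & 0\end{bmatrix}.$$ Thus $\mathcal R=\mathcal T+\mathcal D$. For $\omega>0$, the NASS preconditioner is $$\mathcal F_\omega=\tfrac{1}{2\omega}(\omega I+\mathcal T)(\omega I+\mathcal D).$$ *)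

theory Defs
  imports "HOL-Analysis.Analysis"
begin

definition block2 :: "real^'m^'m \<Rightarrow> real^'m^'m \<Rightarrow> real^'m^'m \<Rightarrow> real^'m^'m
    \<Rightarrow> real^('m::finite + 'm)^('m + 'm)" where
  "block2 A B C E = (\<chi> i j. (case i of
       Inl i' \<Rightarrow> (case j of Inl j' \<Rightarrow> A$i'$j' | Inr j' \<Rightarrow> B$i'$j')
     | Inr i' \<Rightarrow> (case j of Inl j' \<Rightarrow> C$i'$j' | Inr j' \<Rightarrow> E$i'$j')))"

definition diagm :: "real^'m \<Rightarrow> real^'m^'m" where
  "diagm d = (\<chi> i j. if i = j then d$i else 0)"

definition norm2 :: "real^'n^'m \<Rightarrow> real" where
  "norm2 A = onorm (\<lambda>x. A *v x)"

definition calR :: "real^'m^'m \<Rightarrow> real^'m \<Rightarrow> real^('m::finite + 'm)^('m + 'm)" where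
  "calR T d = block2 (mat 1) (T - diagm d) (diagm d - T) (mat 1)"

definition calT :: "real^'m^'m \<Rightarrow> real^('m::finite + 'm)^('m + 'm)" where
  "calT T = block2 (mat 1) T (- T) (mat 1)"

definition calD :: "real^'m \<Rightarrow> real^('m::finite + 'm)^('m + 'm)" where
  "calD d = block2 0 (- diagm d) (diagm d) 0"

definition NASS :: "real \<Rightarrow> real^'m^'m \<Rightarrow> real^'m \<Rightarrow> real^('m::finite + 'm)^('m + 'm)" where
  "NASS \<omega> T d = (1 / (2 * \<omega>)) *\<^sub>R ((\<omega> *\<^sub>R mat 1 + calT T) ** (\<omega> *\<^sub>R mat 1 + calD d))"

end

theory Submission
  imports Defs
begin

text \<open>
  With \<open>A = \<omega>I + \<T>\<close>, \<open>B = \<omega>I - \<T>\<close>, \<open>C = \<omega>I + \<D>\<close>, \<open>E = \<omega>I - \<D>\<close> one has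
  \<open>2\<omega>\<F>\<^sub>\<omega> = AC\<close> and \<open>2\<omega>\<R> = AC - BE\<close>, hence \<open>\<F>\<^sub>\<omega>\<^sup>-\<^sup>1\<R> = I - C\<^sup>-\<^sup>1(A\<^sup>-\<^sup>1B)E\<close>.
  Since \<open>\<T> - I\<close> and \<open>\<D>\<close> are skew-symmetric, \<open>|Bz|\<^sup>2 = |Az|\<^sup>2 - 4\<omega>|z|\<^sup>2\<close>, so the Cayley
  transform \<open>A\<^sup>-\<^sup>1B\<close> has norm \<open>q < 1\<close> (strictly, by finite dimension), while
  \<open>|C\<^sup>-\<^sup>1| \<le> 1/\<omega>\<close> and \<open>|E| \<le> \<surd>(\<omega>\<^sup>2 + \<nu>\<^sup>2)\<close>. Thus
  \<open>|\<F>\<^sub>\<omega>\<^sup>-\<^sup>1\<R>| \<le> 1 + q\<surd>(\<omega>\<^sup>2 + \<nu>\<^sup>2)/\<omega> < 2\<surd>(\<omega>\<^sup>2 + \<nu>\<^sup>2)/\<omega>\<close>, using \<open>\<omega> \<le> \<surd>(\<omega>\<^sup>2 + \<nu>\<^sup>2)\<close>.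
\<close>

lemma matrix_vector_mult_shift:
  fixes X :: "real^'n::finite^'n"
  shows "(c *\<^sub>R mat 1 + X) *v x = c *\<^sub>R x + X *v x"
    and "(c *\<^sub>R mat 1 - X) *v x = c *\<^sub>R x - X *v x"
  by (simp_all add: matrix_vector_mult_add_rdistrib matrix_vector_mult_diff_rdistrib
      flip: scaleR_matrix_vector_assoc)

lemma inner_skew_matrix_vector:
  fixes S :: "real^'n::finite^'n"
  assumes "transpose S = - S"
  shows "x \<bullet> (S *v x) = 0"
proof -
  have "x \<bullet> (S *v x) = (transpose S *v x) \<bullet> x"
    by (simp add: dot_lmul_matrix[symmetric] inner_commute)
  also have "transpose S *v x = - (S *v x)"
    by (simp add: assms vec_eq_iff matrix_vector_mult_def sum_negf)
  finally show ?thesis by (simp add: inner_commute)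
qed

lemma norm_shift_matrix_vector_sq:
  fixes X :: "real^'n::finite^'n"
  shows "(norm ((c *\<^sub>R mat 1 + X) *v z))\<^sup>2
           = c\<^sup>2 * (norm z)\<^sup>2 + 2 * c * (z \<bullet> (X *v z)) + (norm (X *v z))\<^sup>2"
  unfolding matrix_vector_mult_shift power2_norm_eq_inner
  by (simp add: inner_add_left inner_add_right inner_commute power2_eq_square algebra_simps)

lemma norm_shift_matrix_vector_lower_bound:
  fixes X :: "real^'n::finite^'n"
  assumes "\<And>z. z \<bullet> (X *v z) \<ge> 0" and "c \<ge> 0"
  shows "c * norm z \<le> norm ((c *\<^sub>R mat 1 + X) *v z)"
proof (rule power2_le_imp_le)
  show "(c * norm z)\<^sup>2 \<le> (norm ((c *\<^sub>R mat 1 + X) *v z))\<^sup>2"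
    unfolding norm_shift_matrix_vector_sq using assms(1)[of z] \<open>c \<ge> 0\<close>
    by (simp add: power_mult_distrib)
qed simp

lemma shifted_product_difference:
  fixes X Y :: "real^'n::finite^'n"
  shows "(\<omega> *\<^sub>R mat 1 + X) *v ((\<omega> *\<^sub>R mat 1 + Y) *v x)
           - (\<omega> *\<^sub>R mat 1 - X) *v ((\<omega> *\<^sub>R mat 1 - Y) *v x)
         = (2 * \<omega>) *\<^sub>R ((X + Y) *v x)"
  unfolding matrix_vector_mult_shift
  by (simp add: matrix_vector_right_distrib matrix_vector_mult_diff_distrib
      matrix_vector_mult_add_rdistrib matrix_vector_mult_scaleR vec_eq_iff algebra_simps)

lemma shifted_commute:
  fixes X :: "real^'n::finite^'n"
  shows "(\<omega> *\<^sub>R mat 1 + X) *v ((\<omega> *\<^sub>R mat 1 - X) *v x)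
       = (\<omega> *\<^sub>R mat 1 - X) *v ((\<omega> *\<^sub>R mat 1 + X) *v x)"
  unfolding matrix_vector_mult_shift
  by (simp add: matrix_vector_right_distrib matrix_vector_mult_diff_distrib
      matrix_vector_mult_scaleR algebra_simps)

lemma norm_shift_skew_le:
  fixes D :: "real^'n::finite^'n"
  assumes "transpose D = - D" and "\<And>z. norm (D *v z) \<le> b * norm z"
  shows "norm ((c *\<^sub>R mat 1 - D) *v z) \<le> sqrt (c\<^sup>2 + b\<^sup>2) * norm z"
proof (rule power2_le_imp_le)
  have neg: "(- D) *v z = - (D *v z)"
    by (simp add: vec_eq_iff matrix_vector_mult_def sum_negf)
  have "(norm ((c *\<^sub>R mat 1 - D) *v z))\<^sup>2 = (norm ((c *\<^sub>R mat 1 + (- D)) *v z))\<^sup>2"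
    by simp
  also have "\<dots> = c\<^sup>2 * (norm z)\<^sup>2 + (norm (D *v z))\<^sup>2"
    unfolding norm_shift_matrix_vector_sq neg
    using inner_skew_matrix_vector[OF assms(1), of z] by simp
  also have "\<dots> \<le> c\<^sup>2 * (norm z)\<^sup>2 + (b * norm z)\<^sup>2"
    using assms(2)[of z] by (simp add: power_mono)
  also have "\<dots> = (sqrt (c\<^sup>2 + b\<^sup>2) * norm z)\<^sup>2"
    by (simp add: power_mult_distrib algebra_simps)
  finally show "(norm ((c *\<^sub>R mat 1 - D) *v z))\<^sup>2 \<le> (sqrt (c\<^sup>2 + b\<^sup>2) * norm z)\<^sup>2" .
qed simp

lemma invertible_if_norm_lower_bound:
  fixes M :: "real^'n::finite^'n"
  assumes "c > 0" and "\<And>z. c * norm z \<le> norm (M *v z)"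
  shows "invertible M"
proof -
  have "inj ((*v) M)"
  proof (rule injI)
    fix a b assume "M *v a = M *v b"
    then have "c * norm (a - b) \<le> 0"
      using assms(2)[of "a - b"] by (simp add: matrix_vector_mult_diff_distrib)
    then show "a = b" using \<open>c > 0\<close> by (simp add: mult_le_0_iff)
  qed
  then show ?thesis
    by (simp add: invertible_left_inverse matrix_left_invertible_injective)
qed

lemma matrix_inv_right:
  fixes M :: "real^'n::finite^'n"
  assumes "invertible M"
  shows "M ** matrix_inv M = mat 1"
  using assms unfolding invertible_def matrix_inv_def by (rule someI_ex[THEN conjunct1])

lemma shifted_cayley_contraction:
  fixes X :: "real^'n::finite^'n"
  assumes hermitian_part_id: "\<And>z. z \<bullet> (X *v z) = (norm z)\<^sup>2" and "\<omega> > 0"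
  obtains q where "0 \<le> q" "q < 1"
    "\<And>z. norm ((\<omega> *\<^sub>R mat 1 - X) *v z) \<le> q * norm ((\<omega> *\<^sub>R mat 1 + X) *v z)"
proof -
  define A where "A = \<omega> *\<^sub>R mat 1 + X"
  \<comment> \<open>any bound on \<open>A\<close> with \<open>K\<^sup>2 \<ge> 4\<omega>\<close> works; finiteness of \<open>K\<close> is what makes \<open>q < 1\<close>\<close>
  define K where "K = onorm ((*v) A) + 2 * sqrt \<omega>"
  define q where "q = sqrt (1 - 4 * \<omega> / K\<^sup>2)"
  have "onorm ((*v) A) \<ge> 0"
    by (rule onorm_pos_le[OF matrix_vector_mul_bounded_linear])
  then have "2 * sqrt \<omega> \<le> K" unfolding K_def by simp
  then have "(2 * sqrt \<omega>)\<^sup>2 \<le> K\<^sup>2" using \<open>\<omega> > 0\<close> by (intro power_mono) auto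
  then have K_sq: "4 * \<omega> \<le> K\<^sup>2" using \<open>\<omega> > 0\<close> by (simp add: power_mult_distrib)
  have K_pos: "K > 0"
    using \<open>2 * sqrt \<omega> \<le> K\<close> real_sqrt_gt_zero[OF \<open>\<omega> > 0\<close>] by linarith
  have A_bound: "norm (A *v z) \<le> K * norm z" for z
  proof -
    have "norm (A *v z) \<le> onorm ((*v) A) * norm z"
      by (rule onorm[OF matrix_vector_mul_bounded_linear])
    also have "\<dots> \<le> K * norm z"
      unfolding K_def using \<open>\<omega> > 0\<close> by (intro mult_right_mono) auto
    finally show ?thesis .
  qed
  have "(norm ((\<omega> *\<^sub>R mat 1 - X) *v z))\<^sup>2 \<le> (q * norm (A *v z))\<^sup>2" for z
  proof -
    \<comment> \<open>only the cross terms differ, and \<open>z \<bullet> X z = |z|\<^sup>2\<close>\<close>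
    have "(norm ((\<omega> *\<^sub>R mat 1 - X) *v z))\<^sup>2 = (norm (A *v z))\<^sup>2 - 4 * \<omega> * (norm z)\<^sup>2"
      unfolding A_def matrix_vector_mult_shift power2_norm_eq_inner
      using hermitian_part_id[of z]
      by (simp add: inner_add_left inner_add_right inner_diff_left inner_diff_right
          inner_commute power2_norm_eq_inner algebra_simps)
    also have "\<dots> \<le> (norm (A *v z))\<^sup>2 - 4 * \<omega> * ((norm (A *v z))\<^sup>2 / K\<^sup>2)"
    proof -
      have "(norm (A *v z))\<^sup>2 \<le> (K * norm z)\<^sup>2" by (rule power_mono[OF A_bound]) simp
      then have "(norm (A *v z))\<^sup>2 / K\<^sup>2 \<le> (norm z)\<^sup>2"
        using K_pos by (simp add: divide_le_eq power_mult_distrib mult.commute)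
      then have "4 * \<omega> * ((norm (A *v z))\<^sup>2 / K\<^sup>2) \<le> 4 * \<omega> * (norm z)\<^sup>2"
        using \<open>\<omega> > 0\<close> by (intro mult_left_mono) auto
      then show ?thesis by linarith
    qed
    also have "\<dots> = (q * norm (A *v z))\<^sup>2"
      unfolding q_def using K_sq K_pos by (simp add: power_mult_distrib algebra_simps)
    finally show ?thesis .
  qed
  moreover have "0 \<le> q" unfolding q_def using K_sq K_pos by simp
  moreover have "q < 1" unfolding q_def using \<open>\<omega> > 0\<close> K_pos by simp
  ultimately show thesis
    by (intro that[of q]) (auto simp: A_def intro: power2_le_imp_le)
qed

lemma norm2_inverse_splitting_le:
  fixes A B C E F R :: "real^'n::finite^'n"
  assumes "\<omega> > 0" "q \<ge> 0" "invertible A" "invertible F"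
    and F_factor: "\<And>x. (2 * \<omega>) *\<^sub>R (F *v x) = A *v (C *v x)"
    and splitting: "\<And>x. A *v (C *v x) - B *v (E *v x) = (2 * \<omega>) *\<^sub>R (R *v x)"
    and commute: "\<And>x. A *v (B *v x) = B *v (A *v x)"
    and contraction: "\<And>z. norm (B *v z) \<le> q * norm (A *v z)"
    and C_lower: "\<And>z. \<omega> * norm z \<le> norm (C *v z)"
    and E_upper: "\<And>z. norm (E *v z) \<le> s * norm z"
  shows "norm2 (matrix_inv F ** R) \<le> 1 + q * s / \<omega>"
  unfolding norm2_def
proof (rule onorm_le)
  fix x
  define y where "y = (matrix_inv F ** R) *v x"
  obtain Ai where Ai: "A ** Ai = mat 1"
    using \<open>invertible A\<close> invertible_right_inverse by blast
  define z where "z = Ai *v (E *v x)"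
  have Az: "A *v z = E *v x"
    unfolding z_def by (simp add: matrix_vector_mul_assoc matrix_mul_assoc Ai)
  have "F *v y = R *v x"
    unfolding y_def
    by (simp add: matrix_vector_mul_assoc matrix_mul_assoc matrix_inv_right[OF \<open>invertible F\<close>])
  then have "A *v (C *v y) = A *v (C *v x) - B *v (E *v x)"
    using F_factor[of y] splitting[of x] by simp
  also have "\<dots> = A *v (C *v x) - A *v (B *v z)"
    using commute[of z] Az by simp
  finally have "A *v (C *v (x - y)) = A *v (B *v z)"
    by (simp add: matrix_vector_mult_diff_distrib)
  then have "C *v (x - y) = B *v z"
    using \<open>invertible A\<close> matrix_left_invertible_injective invertible_left_inverse
    by (metis injD)
  \<comment> \<open>\<open>x - y = C\<^sup>-\<^sup>1 A\<^sup>-\<^sup>1 B E x\<close> is the error of one splitting step\<close>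
  then have "\<omega> * norm (x - y) \<le> q * norm (E *v x)"
    using C_lower[of "x - y"] contraction[of z] Az by simp
  also have "\<dots> \<le> q * (s * norm x)"
    using E_upper \<open>q \<ge> 0\<close> by (rule mult_left_mono)
  finally have "norm (x - y) \<le> q * s / \<omega> * norm x"
    using \<open>\<omega> > 0\<close> by (simp add: field_simps)
  then have "norm y \<le> norm x + q * s / \<omega> * norm x"
    using norm_triangle_ineq4[of x "x - y"] by simp
  then show "norm ((matrix_inv F ** R) *v x) \<le> (1 + q * s / \<omega>) * norm x"
    unfolding y_def by (simp add: distrib_right)
qed

lemma sum_UNIV_Plus:
  "(\<Sum>k\<in>(UNIV::('m::finite + 'm) set). g k) = (\<Sum>i\<in>UNIV. g (Inl i)) + (\<Sum>i\<in>UNIV. g (Inr i))"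
  using sum.Plus[of "UNIV::'m set" "UNIV::'m set" g] by (simp add: comp_def)

lemma calR_eq_calT_plus_calD: "calR T d = calT T + calD d"
  by (simp add: vec_eq_iff calR_def calT_def calD_def block2_def mat_def diagm_def split: sum.split)

lemma transpose_calD: "transpose (calD d) = - calD d"
  by (simp add: vec_eq_iff calD_def block2_def transpose_def diagm_def split: sum.split)

lemma inner_calT:
  assumes "transpose T = T"
  shows "z \<bullet> (calT T *v z) = (norm z)\<^sup>2"
proof -
  have "transpose (calT T - mat 1) = - (calT T - mat 1)"
    using assms
    by (simp add: vec_eq_iff calT_def block2_def transpose_def mat_def split: sum.split)
  then have "z \<bullet> ((calT T - mat 1) *v z) = 0" by (rule inner_skew_matrix_vector)
  then show ?thesis
    by (simp add: matrix_vector_mult_diff_rdistrib inner_diff_right power2_norm_eq_inner)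
qed

lemma calD_matrix_vector_component:
  "(calD d *v x) $ k = (case k of Inl i \<Rightarrow> - d$i * x$Inr i | Inr i \<Rightarrow> d$i * x$Inl i)"
  by (simp add: matrix_vector_mult_def sum_UNIV_Plus calD_def block2_def diagm_def
      if_distrib[of "\<lambda>t. t * _"] sum.delta sum_negf cong: if_cong split: sum.split)

lemma norm_calD_le:
  assumes "\<And>j. \<bar>d$j\<bar> \<le> b"
  shows "norm (calD d *v x) \<le> b * norm x"
proof (rule power2_le_imp_le)
  have "(norm (calD d *v x))\<^sup>2
      = (\<Sum>i\<in>UNIV. (d$i)\<^sup>2 * (x$Inr i)\<^sup>2) + (\<Sum>i\<in>UNIV. (d$i)\<^sup>2 * (x$Inl i)\<^sup>2)"
    unfolding power2_norm_eq_inner inner_vec_def sum_UNIV_Plus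
    by (simp add: calD_matrix_vector_component power2_eq_square mult_ac)
  also have "\<dots> \<le> (\<Sum>i\<in>UNIV. b\<^sup>2 * (x$Inr i)\<^sup>2) + (\<Sum>i\<in>UNIV. b\<^sup>2 * (x$Inl i)\<^sup>2)"
    using assms by (intro add_mono sum_mono mult_right_mono power2_le_iff_abs_le[THEN iffD2])
      (auto intro: order_trans[OF abs_ge_zero])
  also have "\<dots> = (b * norm x)\<^sup>2"
    unfolding power_mult_distrib power2_norm_eq_inner inner_vec_def sum_UNIV_Plus
    by (simp add: sum_distrib_left power2_eq_square distrib_left)
  finally show "(norm (calD d *v x))\<^sup>2 \<le> (b * norm x)\<^sup>2" .
  show "0 \<le> b * norm x" using order_trans[OF abs_ge_zero assms] by simp
qed

lemma calT_shift_lower_bound: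
  assumes "transpose T = T" and "c \<ge> 0"
  shows "c * norm z \<le> norm ((c *\<^sub>R mat 1 + calT T) *v z)"
  using assms by (intro norm_shift_matrix_vector_lower_bound) (simp_all add: inner_calT)

lemma calD_shift_lower_bound:
  assumes "c \<ge> 0"
  shows "c * norm z \<le> norm ((c *\<^sub>R mat 1 + calD d) *v z)"
  using assms
  by (intro norm_shift_matrix_vector_lower_bound) (simp_all add: inner_skew_matrix_vector transpose_calD)

lemma NASS_factor:
  assumes "\<omega> \<noteq> 0"
  shows "(2 * \<omega>) *\<^sub>R (NASS \<omega> T d *v x)
           = (\<omega> *\<^sub>R mat 1 + calT T) *v ((\<omega> *\<^sub>R mat 1 + calD d) *v x)"
  using assms by (simp add: NASS_def matrix_vector_mul_assoc flip: scaleR_matrix_vector_assoc)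

lemma invertible_NASS:
  assumes "transpose T = T" and "\<omega> > 0"
  shows "invertible (NASS \<omega> T d)"
proof (rule invertible_if_norm_lower_bound)
  fix z
  have "\<omega> * (\<omega> * norm z) \<le> \<omega> * norm ((\<omega> *\<^sub>R mat 1 + calD d) *v z)"
    using calD_shift_lower_bound[of \<omega>] \<open>\<omega> > 0\<close> by simp
  also have "\<dots> \<le> norm ((\<omega> *\<^sub>R mat 1 + calT T) *v ((\<omega> *\<^sub>R mat 1 + calD d) *v z))"
    using assms by (intro calT_shift_lower_bound) auto
  also have "\<dots> = 2 * \<omega> * norm (NASS \<omega> T d *v z)"
    using \<open>\<omega> > 0\<close> by (simp flip: NASS_factor)
  finally show "\<omega> / 2 * norm z \<le> norm (NASS \<omega> T d *v z)"
    using \<open>\<omega> > 0\<close> by (simp add: field_simps)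
qed (use \<open>\<omega> > 0\<close> in simp)

text \<open>Only the symmetry of \<open>T\<close> enters the proof.\<close>

theorem mainTheorem8:
  fixes T :: "real^'m::finite^'m" and d :: "real^'m" and \<omega> :: real
  assumes symT: "transpose T = T"
    and posdefT: "\<And>x. x \<noteq> 0 \<Longrightarrow> x \<bullet> (T *v x) > 0"
    and dnonneg: "\<And>j. d$j \<ge> 0"
    and \<omega>pos: "\<omega> > 0"
  shows "norm2 (matrix_inv (NASS \<omega> T d) ** calR T d)
           < 2 * sqrt (\<omega>^2 + (Max (range (\<lambda>j. d$j)))^2) / \<omega>"
proof -
  define s where "s = sqrt (\<omega>\<^sup>2 + (Max (range (\<lambda>j. d$j)))\<^sup>2)"
  obtain q where q: "0 \<le> q" "q < 1" "\<And>z. norm ((\<omega> *\<^sub>R mat 1 - calT T) *v z)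
      \<le> q * norm ((\<omega> *\<^sub>R mat 1 + calT T) *v z)"
    using shifted_cayley_contraction[OF inner_calT[OF symT] \<omega>pos] by blast
  have "norm2 (matrix_inv (NASS \<omega> T d) ** calR T d) \<le> 1 + q * s / \<omega>"
  proof (rule norm2_inverse_splitting_le[where
        A = "\<omega> *\<^sub>R mat 1 + calT T" and B = "\<omega> *\<^sub>R mat 1 - calT T" and
        C = "\<omega> *\<^sub>R mat 1 + calD d" and E = "\<omega> *\<^sub>R mat 1 - calD d"])
    show "invertible (\<omega> *\<^sub>R mat 1 + calT T)"
      using \<omega>pos symT by (intro invertible_if_norm_lower_bound[of \<omega>]) (auto intro: calT_shift_lower_bound)
    show "norm ((\<omega> *\<^sub>R mat 1 - calD d) *v z) \<le> s * norm z" for z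
      unfolding s_def using dnonneg
      by (intro norm_shift_skew_le transpose_calD norm_calD_le) (simp add: Max_ge)
  qed (use \<omega>pos q symT in \<open>simp_all add: invertible_NASS NASS_factor calD_shift_lower_bound
        calR_eq_calT_plus_calD shifted_product_difference shifted_commute\<close>)
  also have "\<dots> < 2 * s / \<omega>"
  proof -
    have "\<omega> \<le> s" unfolding s_def by (simp add: real_le_rsqrt)
    moreover have "q * s < s"
      using q(2) \<open>\<omega> \<le> s\<close> \<omega>pos by (simp add: mult_strict_right_mono)
    ultimately have "(\<omega> + q * s) / \<omega> < (2 * s) / \<omega>"
      using \<omega>pos by (intro divide_strict_right_mono) linarith+
    then show ?thesis using \<omega>pos by (simp add: add_divide_distrib)
  qed
  finally show ?thesis unfolding s_def .
qed

end
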